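(* Let $\kappa_1>0$, $\kappa_2>0$ and $C\ge0$. Let $f$ be a nonnegative continuous function on $(0,1]$ such that $\int_0^1 f<+\infty$. Assume that $G:[0,1]\to[0,+\infty)$ is continuous on $[0,1]$, of class $\mathcal{C}^1$ on $(0,1]$, and satisfies on $(0,1]$ the differential inequality $$G'(t)\le Ct^{\kappa_1-1}G(t)+f(t)\sqrt{G(t)}+Ct^{\kappa_2-1},\qquad G(0)=0.$$ Then for all $t\in[0,1]$, $$G(t)\lesssim\Big(\int_0^t f\Big)^2+t^{\kappa_2},$$ where the implicit constant depends only on $\kappa_1,\kappa_2,C$. *)

theory Defs
  imports "HOL-Analysis.Analysis"
begin

end

theory Submission
  imports Defs
begin

text \<open>The integrating factor \<open>w s = exp (- (C / \<kappa>1) * s powr \<kappa>1)\<close>, which takes values in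
  \<open>[e, 1]\<close> on \<open>[0, 1]\<close> with \<open>e = exp (- C / \<kappa>1)\<close>, absorbs the linear term:
  \<open>(w G)' \<le> f sqrt G + C t powr (\<kappa>2 - 1)\<close>. If \<open>w G\<close> attains its maximum \<open>M\<close> over \<open>[0, T]\<close>
  at \<open>s\<^sub>0\<close>, then \<open>G \<le> M / e\<close> on \<open>[0, T]\<close>, and integrating over \<open>[0, s\<^sub>0]\<close> gives
  \<open>M \<le> sqrt (M / e) * \<integral>\<^sub>0\<^sup>T f + (C / \<kappa>2) T powr \<kappa>2\<close>. This quadratic inequality in \<open>sqrt M\<close>
  bounds \<open>M\<close>, and \<open>G T \<le> M / e\<close>.\<close>

lemma le_sqrt_mult_add_imp_le:
  fixes M a b :: real
  assumes "0 \<le> M" and "M \<le> sqrt M * a + b"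
  shows "M \<le> a\<^sup>2 + 2 * b"
proof -
  have "2 * (sqrt M * a) \<le> M + a\<^sup>2"
    using zero_le_power2[of "sqrt M - a"] \<open>0 \<le> M\<close> by (simp add: power2_diff)
  then show ?thesis
    using assms(2) by linarith
qed

lemma divide_add_mult_divide_le_mult:
  fixes e c P a :: real
  assumes "0 < e" "e \<le> 1" "0 \<le> c" "0 \<le> P" "0 \<le> a"
  shows "(a / e + c * P) / e \<le> (1 + c) / e\<^sup>2 * (a + P)"
proof -
  have "e\<^sup>2 \<le> e"
    using assms by (simp add: power2_eq_square mult_left_le_one_le)
  then have "c * P / e \<le> c * P / e\<^sup>2"
    using assms by (intro divide_left_mono) auto
  moreover have "0 \<le> c * a / e\<^sup>2" and "0 \<le> P / e\<^sup>2"
    using assms by auto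
  moreover have "(a / e + c * P) / e = a / e\<^sup>2 + c * P / e"
    and "(1 + c) / e\<^sup>2 * (a + P) = a / e\<^sup>2 + c * a / e\<^sup>2 + P / e\<^sup>2 + c * P / e\<^sup>2"
    using assms by (simp_all add: field_simps power2_eq_square)
  ultimately show ?thesis
    by linarith
qed

lemma integral_nonneg_greaterThanAtMost:
  fixes f :: "real \<Rightarrow> real"
  assumes "f integrable_on {a..b}" and "\<And>x. x \<in> {a<..b} \<Longrightarrow> 0 \<le> f x"
  shows "0 \<le> integral {a..b} f"
proof -
  define g where "g x = (if x = a then 0 else f x)" for x
  have "integral {a..b} f = integral {a..b} g"
    by (rule integral_spike[of "{a}"]) (auto simp: g_def)
  moreover have "g integrable_on {a..b}"
    by (rule integrable_spike[OF assms(1), of "{a}"]) (auto simp: g_def)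
  ultimately show ?thesis
    using assms(2) by (auto simp: g_def intro: integral_nonneg)
qed

lemma integral_mono_upper_limit:
  fixes f :: "real \<Rightarrow> real"
  assumes f: "f integrable_on {a..b}" and nonneg: "\<And>x. x \<in> {a<..b} \<Longrightarrow> 0 \<le> f x"
    and "a \<le> s" and "s \<le> t" and "t \<le> b"
  shows "integral {a..s} f \<le> integral {a..t} f"
proof -
  have "f integrable_on {a..t}" and "f integrable_on {s..t}"
    using f assms(3-5) integrable_subinterval_real by fastforce+
  have "integral {a..s} f + integral {s..t} f = integral {a..t} f"
    using \<open>f integrable_on {a..t}\<close> \<open>a \<le> s\<close> \<open>s \<le> t\<close>
    by (rule Henstock_Kurzweil_Integration.integral_combine[rotated 2])
  moreover have "0 \<le> integral {s..t} f"
    using \<open>f integrable_on {s..t}\<close>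
  proof (rule integral_nonneg_greaterThanAtMost)
    fix x
    assume "x \<in> {s<..t}"
    then show "0 \<le> f x"
      using nonneg assms(3,5) by simp
  qed
  ultimately show ?thesis
    by linarith
qed

lemma integral_has_real_derivative_interior:
  fixes f :: "real \<Rightarrow> real"
  assumes "f integrable_on {a..b}" and "isCont f x" and "a < x" and "x < b"
  shows "((\<lambda>s. integral {a..s} f) has_real_derivative f x) (at x)"
proof -
  have "((\<lambda>s. integral {a..s} f) has_vector_derivative f x) (at x within {a..b} - {})"
    using assms by (intro integral_has_vector_derivative_continuous_at)
      (auto intro: continuous_at_imp_continuous_at_within)
  moreover have "at x within {a..b} = at x"
    using assms by (intro at_within_interior) auto
  ultimately show ?thesis
    by (simp add: has_real_derivative_iff_has_vector_derivative)
qed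

definition decay_factor :: "real \<Rightarrow> real \<Rightarrow> real \<Rightarrow> real" where
  "decay_factor c k s = exp (- (c / k) * s powr k)"

lemma decay_factor_bounds:
  assumes "0 \<le> c" and "0 < k" and "s \<in> {0..1}"
  shows "exp (- c / k) \<le> decay_factor c k s" and "decay_factor c k s \<le> 1"
proof -
  have "0 \<le> s powr k" and "s powr k \<le> 1" and "0 \<le> c / k"
    using assms by (auto simp: powr_le1)
  have "(c / k) * s powr k \<le> c / k"
    using \<open>s powr k \<le> 1\<close> \<open>0 \<le> c / k\<close> by (rule mult_left_le)
  moreover have "0 \<le> (c / k) * s powr k"
    using \<open>0 \<le> c / k\<close> \<open>0 \<le> s powr k\<close> by (rule mult_nonneg_nonneg)
  ultimately show "exp (- c / k) \<le> decay_factor c k s" and "decay_factor c k s \<le> 1"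
    unfolding decay_factor_def by simp_all
qed

lemma decay_factor_pos: "0 < decay_factor c k s"
  by (simp add: decay_factor_def)

lemma continuous_on_decay_factor:
  assumes "0 < k"
  shows "continuous_on {0..} (decay_factor c k)"
  unfolding decay_factor_def
  by (intro continuous_intros continuous_on_powr') (use assms in auto)

lemma has_real_derivative_decay_factor:
  assumes "0 < s" and "k \<noteq> 0"
  shows "(decay_factor c k has_real_derivative - c * s powr (k - 1) * decay_factor c k s) (at s)"
proof -
  have "(decay_factor c k has_real_derivative
      decay_factor c k s * (- (c / k) * (k * s powr (k - 1)))) (at s)"
    unfolding decay_factor_def
    by (rule derivative_eq_intros has_real_derivative_powr assms refl | simp)+
  then show ?thesis
    using assms(2) by (simp add: mult_ac)
qed

locale sqrt_gronwall =
  fixes \<kappa>1 \<kappa>2 C :: real and f G G' :: "real \<Rightarrow> real"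
  assumes \<kappa>1_pos: "0 < \<kappa>1" and \<kappa>2_pos: "0 < \<kappa>2" and C_nonneg: "0 \<le> C"
    and f_nonneg: "\<And>t. t \<in> {0<..1} \<Longrightarrow> 0 \<le> f t"
    and f_continuous: "continuous_on {0<..1} f"
    and f_integrable: "f integrable_on {0..1}"
    and G_continuous: "continuous_on {0..1} G"
    and G_nonneg: "\<And>t. t \<in> {0..1} \<Longrightarrow> 0 \<le> G t"
    and G_derivative: "\<And>t. t \<in> {0<..1} \<Longrightarrow> (G has_real_derivative G' t) (at t within {0<..1})"
    and G'_le: "\<And>t. t \<in> {0<..1} \<Longrightarrow>
      G' t \<le> C * t powr (\<kappa>1 - 1) * G t + f t * sqrt (G t) + C * t powr (\<kappa>2 - 1)"
    and G_0: "G 0 = 0"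
begin

abbreviation w :: "real \<Rightarrow> real" where
  "w \<equiv> decay_factor C \<kappa>1"

lemma w_bounds:
  assumes "t \<in> {0..1}"
  shows "exp (- C / \<kappa>1) \<le> w t" and "w t \<le> 1"
  using decay_factor_bounds[OF C_nonneg \<kappa>1_pos assms] .

lemma G_has_real_derivative_at:
  assumes "0 < t" and "t < 1"
  shows "(G has_real_derivative G' t) (at t)"
proof -
  have "(G has_real_derivative G' t) (at t within {0<..<1})"
    by (rule DERIV_subset[OF G_derivative]) (use assms in auto)
  moreover have "at t within {0<..<1} = at t"
    using assms by (intro at_within_open) auto
  ultimately show ?thesis
    by simp
qed

lemma continuous_on_weighted_G:
  assumes "s \<le> 1"
  shows "continuous_on {0..s} (\<lambda>t. w t * G t)"
proof (rule continuous_on_mult)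
  show "continuous_on {0..s} w"
    using continuous_on_decay_factor[OF \<kappa>1_pos] by (rule continuous_on_subset) auto
  show "continuous_on {0..s} G"
    using G_continuous by (rule continuous_on_subset) (use assms in auto)
qed

lemma G_le_divide_weight_bound:
  assumes "t \<in> {0..1}" and "w t * G t \<le> M"
  shows "G t \<le> M / exp (- C / \<kappa>1)"
proof -
  have "exp (- C / \<kappa>1) * G t \<le> w t * G t"
    using w_bounds(1) G_nonneg assms(1) by (intro mult_right_mono) auto
  with assms(2) show ?thesis
    by (simp add: field_simps)
qed

lemma weighted_derivative_le:
  assumes t: "t \<in> {0<..1}" and "G t \<le> B"
  shows "w t * (G' t - C * t powr (\<kappa>1 - 1) * G t) \<le> f t * sqrt B + C * t powr (\<kappa>2 - 1)"
proof -
  have "0 \<le> f t" and "0 \<le> G t" and "0 < w t" and "w t \<le> 1"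
    using t f_nonneg G_nonneg w_bounds(2) decay_factor_pos by auto
  have "w t * (G' t - C * t powr (\<kappa>1 - 1) * G t) \<le> w t * (f t * sqrt (G t) + C * t powr (\<kappa>2 - 1))"
    using G'_le[OF t] \<open>0 < w t\<close> by (intro mult_left_mono) auto
  also have "\<dots> \<le> f t * sqrt (G t) + C * t powr (\<kappa>2 - 1)"
    using \<open>0 \<le> f t\<close> \<open>0 \<le> G t\<close> \<open>0 < w t\<close> \<open>w t \<le> 1\<close> C_nonneg
    by (intro mult_left_le_one_le) auto
  also have "\<dots> \<le> f t * sqrt B + C * t powr (\<kappa>2 - 1)"
    using \<open>0 \<le> f t\<close> \<open>G t \<le> B\<close> by (simp add: mult_left_mono)
  finally show ?thesis .
qed

lemma weighted_G_le:
  assumes "0 \<le> s" and "s \<le> 1" and G_le: "\<And>t. t \<in> {0..s} \<Longrightarrow> G t \<le> B"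
  shows "w s * G s \<le> sqrt B * integral {0..s} f + C / \<kappa>2 * s powr \<kappa>2"
proof -
  define \<Phi> where "\<Phi> t = w t * G t - sqrt B * integral {0..t} f - C / \<kappa>2 * t powr \<kappa>2" for t
  have "\<Phi> s \<le> \<Phi> 0"
  proof (rule DERIV_nonpos_imp_decreasing_open[OF \<open>0 \<le> s\<close>])
    fix t
    assume t: "0 < t" "t < s"
    have "isCont f t"
      using f_continuous t \<open>s \<le> 1\<close> by (intro continuous_on_interior[of "{0<..1}"]) auto
    have "(\<Phi> has_real_derivative
        (- C * t powr (\<kappa>1 - 1) * w t) * G t + G' t * w t - sqrt B * f t - C / \<kappa>2 * (\<kappa>2 * t powr (\<kappa>2 - 1)))
        (at t)"
      unfolding \<Phi>_def using t \<open>s \<le> 1\<close> \<kappa>1_pos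
      by (intro DERIV_diff DERIV_mult DERIV_cmult has_real_derivative_decay_factor
          G_has_real_derivative_at integral_has_real_derivative_interior[OF f_integrable \<open>isCont f t\<close>]
          has_real_derivative_powr) auto
    moreover have "(- C * t powr (\<kappa>1 - 1) * w t) * G t + G' t * w t - sqrt B * f t
        - C / \<kappa>2 * (\<kappa>2 * t powr (\<kappa>2 - 1)) \<le> 0"
      using weighted_derivative_le[of t B] G_le[of t] t \<open>s \<le> 1\<close> \<kappa>2_pos
      by (simp add: algebra_simps)
    ultimately show "\<exists>y. (\<Phi> has_real_derivative y) (at t) \<and> y \<le> 0"
      by blast
  next
    have "continuous_on {0..s} (\<lambda>t. integral {0..t} f)"
      using indefinite_integral_continuous_1[OF f_integrable] by (rule continuous_on_subset) (use \<open>s \<le> 1\<close> in auto)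
    then show "continuous_on {0..s} \<Phi>"
      unfolding \<Phi>_def using \<kappa>2_pos
      by (intro continuous_on_diff continuous_on_weighted_G[OF \<open>s \<le> 1\<close>] continuous_on_mult_left
          continuous_on_powr' continuous_on_id continuous_on_const) auto
  qed
  moreover have "\<Phi> 0 = 0"
    using G_0 \<kappa>2_pos by (simp add: \<Phi>_def)
  ultimately have "\<Phi> s \<le> 0"
    by simp
  then show ?thesis
    by (simp add: \<Phi>_def)
qed

lemma G_bound:
  assumes T: "T \<in> {0..1}"
  shows "G T \<le> (1 + 2 * (C / \<kappa>2)) / (exp (- C / \<kappa>1))\<^sup>2 * ((integral {0..T} f)\<^sup>2 + T powr \<kappa>2)"
proof -
  define e where "e = exp (- C / \<kappa>1)"
  define A where "A = integral {0..T} f"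
  have "0 < e" and "e \<le> 1"
    using C_nonneg \<kappa>1_pos by (auto simp: e_def)
  obtain s\<^sub>0 where s\<^sub>0: "s\<^sub>0 \<in> {0..T}" and max: "\<And>t. t \<in> {0..T} \<Longrightarrow> w t * G t \<le> w s\<^sub>0 * G s\<^sub>0"
    using continuous_attains_sup[OF compact_Icc _ continuous_on_weighted_G[of T]] T by auto
  define M where "M = w s\<^sub>0 * G s\<^sub>0"
  have "0 \<le> M"
    unfolding M_def using s\<^sub>0 T
    by (intro mult_nonneg_nonneg less_imp_le[OF decay_factor_pos] G_nonneg) auto
  have G_le: "G t \<le> M / e" if "t \<in> {0..T}" for t
    using G_le_divide_weight_bound[of t M] max[OF that] that T by (simp add: M_def e_def)
  have "M \<le> sqrt (M / e) * integral {0..s\<^sub>0} f + C / \<kappa>2 * s\<^sub>0 powr \<kappa>2"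
    using s\<^sub>0 T G_le unfolding M_def by (intro weighted_G_le) auto
  also have "\<dots> \<le> sqrt M * (A / sqrt e) + C / \<kappa>2 * T powr \<kappa>2"
  proof (rule add_mono)
    have "integral {0..s\<^sub>0} f \<le> A"
      unfolding A_def using f_integrable f_nonneg s\<^sub>0 T by (intro integral_mono_upper_limit) auto
    then have "sqrt (M / e) * integral {0..s\<^sub>0} f \<le> sqrt (M / e) * A"
      using \<open>0 \<le> M\<close> \<open>0 < e\<close> by (intro mult_left_mono) auto
    then show "sqrt (M / e) * integral {0..s\<^sub>0} f \<le> sqrt M * (A / sqrt e)"
      by (simp add: real_sqrt_divide)
    show "C / \<kappa>2 * s\<^sub>0 powr \<kappa>2 \<le> C / \<kappa>2 * T powr \<kappa>2"
      using s\<^sub>0 C_nonneg \<kappa>2_pos by (intro mult_left_mono powr_mono2) auto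
  qed
  finally have "M \<le> (A / sqrt e)\<^sup>2 + 2 * (C / \<kappa>2 * T powr \<kappa>2)"
    by (rule le_sqrt_mult_add_imp_le[OF \<open>0 \<le> M\<close>])
  then have M_le: "M \<le> A\<^sup>2 / e + 2 * (C / \<kappa>2) * T powr \<kappa>2"
    using \<open>0 < e\<close> by (simp add: power_divide)
  have "G T \<le> M / e"
    using G_le T by simp
  also have "\<dots> \<le> (A\<^sup>2 / e + 2 * (C / \<kappa>2) * T powr \<kappa>2) / e"
    using M_le \<open>0 < e\<close> by (simp add: divide_right_mono)
  also have "\<dots> \<le> (1 + 2 * (C / \<kappa>2)) / e\<^sup>2 * (A\<^sup>2 + T powr \<kappa>2)"
    using \<open>0 < e\<close> \<open>e \<le> 1\<close> C_nonneg \<kappa>2_pos by (intro divide_add_mult_divide_le_mult) auto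
  finally show ?thesis
    by (simp add: A_def e_def)
qed

end

theorem lemma2p2:
  fixes \<kappa>1 \<kappa>2 C :: real
  assumes "\<kappa>1 > 0" and "\<kappa>2 > 0" and "C \<ge> 0"
  shows "\<exists>K>0. \<forall>(f :: real \<Rightarrow> real) (G :: real \<Rightarrow> real) (G' :: real \<Rightarrow> real).
    (\<forall>t\<in>{0<..1}. f t \<ge> 0) \<and> continuous_on {0<..1} f \<and> f integrable_on {0..1} \<and>
    continuous_on {0..1} G \<and> (\<forall>t\<in>{0..1}. G t \<ge> 0) \<and>
    (\<forall>t\<in>{0<..1}. (G has_real_derivative G' t) (at t within {0<..1})) \<and>
    continuous_on {0<..1} G' \<and>
    (\<forall>t\<in>{0<..1}. G' t \<le> C * t powr (\<kappa>1 - 1) * G t + f t * sqrt (G t) + C * t powr (\<kappa>2 - 1)) \<and>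
    G 0 = 0
    \<longrightarrow> (\<forall>t\<in>{0..1}. G t \<le> K * ((integral {0..t} f)\<^sup>2 + t powr \<kappa>2))"
proof (intro exI[of _ "(1 + 2 * (C / \<kappa>2)) / (exp (- C / \<kappa>1))\<^sup>2"] conjI allI impI ballI)
  show "0 < (1 + 2 * (C / \<kappa>2)) / (exp (- C / \<kappa>1))\<^sup>2"
    using assms by (simp add: add_pos_nonneg)
qed (elim conjE, rule sqrt_gronwall.G_bound[OF sqrt_gronwall.intro, OF assms], blast+)

end
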